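(* Let $X$ be a compact metric space, $G$ a countable infinite discrete amenable group acting continuously on $X$, and suppose $(X,G)$ has the $g$-almost product property with associated map $m$. Let $x_1,\dots,x_k\in X$, $\varepsilon_1,\dots,\varepsilon_k\in(0,1)$, and pairwise disjoint $F_1,\dots,F_k\in F(G)$ with each $F_j$ being $m(\varepsilon_j)$-invariant. Let $F=\bigcup_{j=1}^kF_j$. Suppose $\mu_1,\dots,\mu_k\in M(X)$ and $\xi_1,\dots,\xi_k>0$ satisfy $\mathcal E_{F_j}(x_j)\in B(\mu_j,\xi_j)$ for $j=1,\dots,k$. Then for every $y\in\bigcap_{j=1}^kB(g;F_j,x_j,\varepsilon_j)$ and every probability measure $\alpha\in M(X)$, \[ D(\mathcal E_F(y),\alpha)\le\sum_{j=1}^k\frac{|F_j|}{|F|}\big(D(\mu_j,\alpha)+\xi_j+\varepsilon_j+g(\varepsilon_j)\big). \]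
   Context: $M(X)$ is the space of Borel probability measures on $X$. $F(G)$ denotes finite subsets of $G$; for $K,F\in F(G)$, $\partial_K(F)=\{c\in G: Kc\cap F\ne\emptyset,\ Kc\cap(G\setminus F)\ne\emptyset\}$ and $F$ is $(K,\delta)$-invariant if $|\partial_K(F)|/|F|<\delta$; "$m(\varepsilon)$-invariant" means $(K,\delta)$-invariant where $m(\varepsilon)=(K,\delta)$. Fix a countable separating family $\{\varphi_i\}$ of continuous functions with $0\le\varphi_i\le1$; $D(\mu,\nu)=\sum_i2^{-i}|\int\varphi_id\mu-\int\varphi_id\nu|$; $B(\mu,\xi)=\{\nu\in M(X):D(\mu,\nu)<\xi\}$; the metric on $X$ is $\rho(x,y)=D(\delta_x,\delta_y)$. $\mathcal E_F(x)=\frac1{|F|}\sum_{s\in F}\delta_{sx}$. $g$-almost product property: $g:(0,1)\to(0,1)$ nondecreasing with $\lim_{r\to0}g(r)=0$; $B(g;F,x,\varepsilon)=\{y: |\{s\in F:\rho(sx,sy)>\varepsilon\}|\le g(\varepsilon)|F|\}$; the property holds with map $m:(0,1)\to F(G)\times(0,1)$ if for all $k$, $\varepsilon_i$, $x_i$ and pairwise disjoint $F_i\in F(G)$ with $F_i$ being $m(\varepsilon_i)$-invariant, $\bigcap_iB(g;F_i,x_i,\varepsilon_i)\ne\emptyset$. *)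

theory Defs
  imports "HOL-Probability.Probability"
begin

text \<open>Groups are written additively (class group_add, not necessarily commutative);
  the product k c of the paper is k + c.\<close>

definition right_translate :: "'g::group_add set \<Rightarrow> 'g \<Rightarrow> 'g set" where
  "right_translate K c = (\<lambda>k. k + c) ` K"

definition bdry :: "'g::group_add set \<Rightarrow> 'g set \<Rightarrow> 'g set" where
  "bdry K F = {c. right_translate K c \<inter> F \<noteq> {} \<and> right_translate K c \<inter> (UNIV - F) \<noteq> {}}"

definition invariant :: "'g::group_add set \<Rightarrow> real \<Rightarrow> 'g set \<Rightarrow> bool" where
  "invariant K \<delta> F \<longleftrightarrow> real (card (bdry K F)) / real (card F) < \<delta>"

definition amenable_group :: "'g::group_add itself \<Rightarrow> bool" where
  "amenable_group _ \<longleftrightarrow> (\<exists>F :: nat \<Rightarrow> 'g set. (\<forall>n. finite (F n) \<and> F n \<noteq> {}) \<and>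
     (\<forall>g. (\<lambda>n. real (card (((\<lambda>s. g + s) ` F n) - F n \<union> (F n - (\<lambda>s. g + s) ` F n)))
               / real (card (F n))) \<longlonglongrightarrow> 0))"

definition probM :: "'x::topological_space measure \<Rightarrow> bool" where
  "probM \<mu> \<longleftrightarrow> prob_space \<mu> \<and> sets \<mu> = sets borel"

definition Dm :: "(nat \<Rightarrow> 'x::topological_space \<Rightarrow> real) \<Rightarrow> 'x measure \<Rightarrow> 'x measure \<Rightarrow> real" where
  "Dm \<phi> \<mu> \<nu> = (\<Sum>i. (1/2) ^ Suc i * \<bar>(\<integral>x. \<phi> i x \<partial>\<mu>) - (\<integral>x. \<phi> i x \<partial>\<nu>)\<bar>)"

definition Bm :: "(nat \<Rightarrow> 'x::topological_space \<Rightarrow> real) \<Rightarrow> 'x measure \<Rightarrow> real \<Rightarrow> 'x measure set" where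
  "Bm \<phi> \<mu> \<xi> = {\<nu>. probM \<nu> \<and> Dm \<phi> \<mu> \<nu> < \<xi>}"

definition rho :: "(nat \<Rightarrow> 'x::topological_space \<Rightarrow> real) \<Rightarrow> 'x \<Rightarrow> 'x \<Rightarrow> real" where
  "rho \<phi> x y = Dm \<phi> (return borel x) (return borel y)"

definition emp :: "('g \<Rightarrow> 'x::topological_space \<Rightarrow> 'x) \<Rightarrow> 'g set \<Rightarrow> 'x \<Rightarrow> 'x measure" where
  "emp act F x = measure_of UNIV (sets borel)
     (\<lambda>A. ennreal ((\<Sum>s\<in>F. indicator A (act s x)) / real (card F)))"

definition Bg :: "(nat \<Rightarrow> 'x::topological_space \<Rightarrow> real) \<Rightarrow> ('g \<Rightarrow> 'x \<Rightarrow> 'x) \<Rightarrow> (real \<Rightarrow> real)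
    \<Rightarrow> 'g set \<Rightarrow> 'x \<Rightarrow> real \<Rightarrow> 'x set" where
  "Bg \<phi> act g F x \<epsilon> = {y. real (card {s\<in>F. rho \<phi> (act s x) (act s y) > \<epsilon>}) \<le> g \<epsilon> * real (card F)}"

definition admissible_g :: "(real \<Rightarrow> real) \<Rightarrow> bool" where
  "admissible_g g \<longleftrightarrow> (\<forall>r\<in>{0<..<1}. g r \<in> {0<..<1}) \<and> mono_on {0<..<1} g \<and> (g \<longlongrightarrow> 0) (at_right 0)"

definition admissible_m :: "(real \<Rightarrow> 'g set \<times> real) \<Rightarrow> bool" where
  "admissible_m m \<longleftrightarrow> (\<forall>\<epsilon>\<in>{0<..<1}. finite (fst (m \<epsilon>)) \<and> snd (m \<epsilon>) \<in> {0<..<1})"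

definition almost_product :: "(nat \<Rightarrow> 'x::topological_space \<Rightarrow> real) \<Rightarrow> ('g::group_add \<Rightarrow> 'x \<Rightarrow> 'x)
    \<Rightarrow> (real \<Rightarrow> real) \<Rightarrow> (real \<Rightarrow> 'g set \<times> real) \<Rightarrow> bool" where
  "almost_product \<phi> act g m \<longleftrightarrow> admissible_g g \<and> admissible_m m \<and>
     (\<forall>(k::nat) (\<epsilon>::nat \<Rightarrow> real) (x::nat \<Rightarrow> 'x) (F::nat \<Rightarrow> 'g set).
        (\<forall>i<k. \<epsilon> i \<in> {0<..<1} \<and> finite (F i) \<and> invariant (fst (m (\<epsilon> i))) (snd (m (\<epsilon> i))) (F i)) \<and>
        (\<forall>i<k. \<forall>j<k. i \<noteq> j \<longrightarrow> F i \<inter> F j = {})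
        \<longrightarrow> (\<Inter>i\<in>{..<k}. Bg \<phi> act g (F i) (x i) (\<epsilon> i)) \<noteq> {})"

end

theory Submission
  imports Defs
begin

text \<open>The integrals of the test functions against the empirical measure of a disjoint union
  F = U_j F_j are the |F_j|/|F|-convex combination of those against the E_{F_j}(y), and D is
  convex in its first argument, so it suffices to bound D(E_{F_j}(y), \<alpha>) for each j. By the triangle
  inequality this is at most D(E_{F_j}(y), E_{F_j}(x_j)) + D(E_{F_j}(x_j), \<mu>_j) + D(\<mu>_j, \<alpha>).
  The middle term is below \<xi>_j by assumption, and the first is at most the average of
  \<rho>(s x_j, s y) over s in F_j, which is at most \<epsilon>_j + g(\<epsilon>_j) because \<rho> \<le> 1 and
  \<rho>(s x_j, s y) > \<epsilon>_j for at most g(\<epsilon>_j)|F_j| elements s.\<close>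

lemma emp_eq_distr:
  fixes act :: "'g \<Rightarrow> 'x::topological_space \<Rightarrow> 'x"
  assumes "finite F" "F \<noteq> {}"
  shows "emp act F x = distr (measure_pmf (pmf_of_set F)) borel (\<lambda>s. act s x)"
proof -
  let ?M = "distr (measure_pmf (pmf_of_set F)) borel (\<lambda>s. act s x)"
  have "emp act F x = measure_of UNIV (sets borel) (emeasure ?M)"
    unfolding emp_def
  proof (rule measure_of_eq)
    show "sets borel \<subseteq> Pow UNIV" by simp
    fix A :: "'x set" assume "A \<in> sigma_sets UNIV (sets borel)"
    then have A: "A \<in> sets borel"
      by (metis sets.sigma_sets_eq space_borel)
    have "(\<Sum>s\<in>F. indicator A (act s x)) = real (card (F \<inter> (\<lambda>s. act s x) -` A))"
      using assms(1) by (simp add: indicator_def sum.If_cases Int_def)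
    moreover have "emeasure ?M A = ennreal (card (F \<inter> (\<lambda>s. act s x) -` A) / card F)"
      using A assms
      by (simp add: emeasure_distr emeasure_pmf_of_set ennreal_of_nat_eq_real_of_nat divide_ennreal)
    ultimately show "ennreal ((\<Sum>s\<in>F. indicator A (act s x)) / real (card F)) = emeasure ?M A"
      by simp
  qed
  also have "\<dots> = ?M"
    using measure_of_of_measure[of ?M] by simp
  finally show ?thesis .
qed

lemma probM_emp:
  fixes act :: "'g \<Rightarrow> 'x::topological_space \<Rightarrow> 'x"
  assumes "finite F" "F \<noteq> {}"
  shows "probM (emp act F x)"
  unfolding probM_def emp_eq_distr[OF assms]
  by (simp add: prob_space.prob_space_distr prob_space_measure_pmf)

lemma integral_emp:
  assumes "finite F" "F \<noteq> {}" "f \<in> borel_measurable borel"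
  shows "(\<integral>z. f z \<partial>emp act F x) = (\<Sum>s\<in>F. f (act s x)) / card F"
  using assms by (simp add: emp_eq_distr integral_distr integral_pmf_of_set)

lemma integral_emp_UN_disjoint:
  assumes "finite I" "I \<noteq> {}"
    and F: "\<And>j. j \<in> I \<Longrightarrow> finite (F j) \<and> F j \<noteq> {}" "disjoint_family_on F I"
    and f: "f \<in> borel_measurable borel"
  shows "(\<integral>z. f z \<partial>emp act (\<Union>j\<in>I. F j) x)
    = (\<Sum>j\<in>I. real (card (F j)) / real (card (\<Union>j\<in>I. F j)) * (\<integral>z. f z \<partial>emp act (F j) x))"
proof -
  have "(\<integral>z. f z \<partial>emp act (\<Union>j\<in>I. F j) x)
      = (\<Sum>j\<in>I. \<Sum>s\<in>F j. f (act s x)) / real (card (\<Union>j\<in>I. F j))"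
    using assms by (simp add: integral_emp sum.UNION_disjoint disjoint_family_on_def)
  also have "\<dots> = (\<Sum>j\<in>I. (\<Sum>s\<in>F j. f (act s x)) / real (card (\<Union>j\<in>I. F j)))"
    by (rule sum_divide_distrib)
  also have "\<dots> = (\<Sum>j\<in>I. real (card (F j)) / real (card (\<Union>j\<in>I. F j))
                            * ((\<Sum>s\<in>F j. f (act s x)) / real (card (F j))))"
    using F(1) by (intro sum.cong) auto
  finally show ?thesis
    using F(1) f by (simp add: integral_emp)
qed

lemma summable_half_powers_times_bounded:
  fixes b :: "nat \<Rightarrow> real"
  assumes "\<And>i. \<bar>b i\<bar> \<le> C"
  shows "summable (\<lambda>i. (1/2::real)^Suc i * b i)"
proof (rule summable_comparison_test')
  show "summable (\<lambda>i. C * (1/2::real)^i)"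
    by (intro summable_mult summable_geometric) simp
  fix n
  have "\<bar>b n\<bar> * (1/2)^Suc n \<le> C * (1/2)^Suc n"
    using assms by (intro mult_right_mono) auto
  also have "\<dots> \<le> C * (1/2)^n"
    using assms[of n] by (simp add: mult_left_mono)
  finally show "norm ((1/2::real)^Suc n * b n) \<le> C * (1/2)^n"
    by (simp add: abs_mult mult.commute)
qed

lemma summable_weighted_diff:
  assumes "\<And>i. 0 \<le> a i \<and> a i \<le> 1" "\<And>i. 0 \<le> b i \<and> b i \<le> 1"
  shows "summable (\<lambda>i. (1/2::real)^Suc i * \<bar>a i - b i\<bar>)"
proof -
  have "\<bar>a i - b i\<bar> \<le> 1" for i
    using assms(1)[of i] assms(2)[of i] by (simp add: abs_le_iff)
  then show ?thesis
    by (intro summable_half_powers_times_bounded[where C=1]) simp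
qed

lemma suminf_half_powers: "(\<Sum>i. (1/2::real)^Suc i) = 1"
proof -
  have "(\<lambda>i. (1/2::real) * (1/2)^i) sums ((1/2) * (1 / (1 - 1/2)))"
    by (intro sums_mult geometric_sums) simp
  then show ?thesis by (simp add: sums_iff)
qed

lemma Dm_commute: "Dm \<phi> \<mu> \<nu> = Dm \<phi> \<nu> \<mu>"
  unfolding Dm_def by (simp add: abs_minus_commute)

lemma integral_unit_bounds:
  fixes f :: "'x::topological_space \<Rightarrow> real"
  assumes "probM \<mu>" "f \<in> borel_measurable borel" "\<And>z. 0 \<le> f z \<and> f z \<le> 1"
  shows "0 \<le> (\<integral>z. f z \<partial>\<mu>) \<and> (\<integral>z. f z \<partial>\<mu>) \<le> 1"
proof -
  interpret prob_space \<mu> using assms(1) unfolding probM_def by simp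
  have "f \<in> borel_measurable \<mu>"
    using assms(1,2) measurable_cong_sets unfolding probM_def by blast
  then have "integrable \<mu> f"
    using assms(3) by (intro integrable_const_bound[where B=1] AE_I2) auto
  then have "(\<integral>z. f z \<partial>\<mu>) \<le> (\<integral>z. 1 \<partial>\<mu>)"
    using assms(3) by (intro integral_mono) auto
  then show ?thesis
    using assms(3) by (simp add: integral_nonneg prob_space)
qed

locale unit_test_family =
  fixes \<phi> :: "nat \<Rightarrow> 'x::topological_space \<Rightarrow> real"
  assumes measurable: "\<And>i. \<phi> i \<in> borel_measurable borel"
    and range: "\<And>i z. 0 \<le> \<phi> i z \<and> \<phi> i z \<le> 1"
begin

lemma integral_bounds: "probM \<mu> \<Longrightarrow> 0 \<le> (\<integral>z. \<phi> i z \<partial>\<mu>) \<and> (\<integral>z. \<phi> i z \<partial>\<mu>) \<le> 1"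
  using integral_unit_bounds measurable range by blast

lemma summable_Dm:
  "probM \<mu> \<Longrightarrow> probM \<nu>
    \<Longrightarrow> summable (\<lambda>i. (1/2::real)^Suc i * \<bar>(\<integral>z. \<phi> i z \<partial>\<mu>) - (\<integral>z. \<phi> i z \<partial>\<nu>)\<bar>)"
  by (intro summable_weighted_diff integral_bounds)

lemma summable_rho: "summable (\<lambda>i. (1/2::real)^Suc i * \<bar>\<phi> i a - \<phi> i b\<bar>)"
  by (intro summable_weighted_diff range)

lemma rho_eq: "rho \<phi> a b = (\<Sum>i. (1/2::real)^Suc i * \<bar>\<phi> i a - \<phi> i b\<bar>)"
  unfolding rho_def Dm_def using measurable by (simp add: integral_return)

lemma rho_le_1: "rho \<phi> a b \<le> 1"
proof -
  have "(\<Sum>i. (1/2::real)^Suc i * \<bar>\<phi> i a - \<phi> i b\<bar>) \<le> (\<Sum>i. (1/2::real)^Suc i)"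
  proof (rule suminf_le)
    show "summable (\<lambda>i. (1/2::real)^Suc i)"
      using summable_half_powers_times_bounded[of "\<lambda>_. 1" 1] by simp
    show "(1/2::real)^Suc i * \<bar>\<phi> i a - \<phi> i b\<bar> \<le> (1/2)^Suc i" for i
      using range[of i a] range[of i b] by (intro mult_left_le) auto
  qed (rule summable_rho)
  then show ?thesis
    unfolding rho_eq suminf_half_powers .
qed

lemma Dm_triangle:
  assumes "probM \<mu>" "probM \<nu>" "probM \<eta>"
  shows "Dm \<phi> \<mu> \<nu> \<le> Dm \<phi> \<mu> \<eta> + Dm \<phi> \<eta> \<nu>"
proof -
  have "Dm \<phi> \<mu> \<nu> \<le> (\<Sum>i. (1/2::real)^Suc i * \<bar>(\<integral>z. \<phi> i z \<partial>\<mu>) - (\<integral>z. \<phi> i z \<partial>\<eta>)\<bar>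
                        + (1/2::real)^Suc i * \<bar>(\<integral>z. \<phi> i z \<partial>\<eta>) - (\<integral>z. \<phi> i z \<partial>\<nu>)\<bar>)"
    unfolding Dm_def
    by (intro suminf_le summable_add summable_Dm assms)
       (simp flip: distrib_left add: mult_left_mono)
  also have "\<dots> = Dm \<phi> \<mu> \<eta> + Dm \<phi> \<eta> \<nu>"
    unfolding Dm_def by (intro suminf_add[symmetric] summable_Dm assms)
  finally show ?thesis .
qed

text \<open>The convex combination of the measures \<nu> j is only required on the integrals of the test
  functions.\<close>
lemma Dm_convex:
  assumes c: "\<And>j. j \<in> I \<Longrightarrow> 0 \<le> c j" "(\<Sum>j\<in>I. c j) = 1"
    and prob: "probM \<mu>" "\<And>j. j \<in> I \<Longrightarrow> probM (\<nu> j)" "probM \<alpha>"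
    and comb: "\<And>i. (\<integral>z. \<phi> i z \<partial>\<mu>) = (\<Sum>j\<in>I. c j * (\<integral>z. \<phi> i z \<partial>\<nu> j))"
  shows "Dm \<phi> \<mu> \<alpha> \<le> (\<Sum>j\<in>I. c j * Dm \<phi> (\<nu> j) \<alpha>)"
proof -
  define d where "d i j = (1/2::real)^Suc i * \<bar>(\<integral>z. \<phi> i z \<partial>\<nu> j) - (\<integral>z. \<phi> i z \<partial>\<alpha>)\<bar>" for i j
  have d_summable: "summable (\<lambda>i. d i j)" if "j \<in> I" for j
    unfolding d_def using prob that by (intro summable_Dm)
  have "\<bar>(\<integral>z. \<phi> i z \<partial>\<mu>) - (\<integral>z. \<phi> i z \<partial>\<alpha>)\<bar>
      = \<bar>\<Sum>j\<in>I. c j * ((\<integral>z. \<phi> i z \<partial>\<nu> j) - (\<integral>z. \<phi> i z \<partial>\<alpha>))\<bar>" for i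
    by (simp add: comb right_diff_distrib sum_subtractf c(2) flip: sum_distrib_right)
  also have "\<dots> i \<le> (\<Sum>j\<in>I. c j * \<bar>(\<integral>z. \<phi> i z \<partial>\<nu> j) - (\<integral>z. \<phi> i z \<partial>\<alpha>)\<bar>)" for i
    using c(1) by (intro order.trans[OF sum_abs] sum_mono) (simp add: abs_mult)
  finally have "(1/2::real)^Suc i * \<bar>(\<integral>z. \<phi> i z \<partial>\<mu>) - (\<integral>z. \<phi> i z \<partial>\<alpha>)\<bar>
      \<le> (1/2::real)^Suc i * (\<Sum>j\<in>I. c j * \<bar>(\<integral>z. \<phi> i z \<partial>\<nu> j) - (\<integral>z. \<phi> i z \<partial>\<alpha>)\<bar>)" for i
    by (rule mult_left_mono) simp
  also have "\<dots> i = (\<Sum>j\<in>I. c j * d i j)" for i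
    unfolding d_def sum_distrib_left by (intro sum.cong refl) (rule mult.left_commute)
  finally have "(1/2::real)^Suc i * \<bar>(\<integral>z. \<phi> i z \<partial>\<mu>) - (\<integral>z. \<phi> i z \<partial>\<alpha>)\<bar>
      \<le> (\<Sum>j\<in>I. c j * d i j)" for i .
  then have "Dm \<phi> \<mu> \<alpha> \<le> (\<Sum>i. \<Sum>j\<in>I. c j * d i j)"
    unfolding Dm_def using d_summable prob by (intro suminf_le summable_Dm summable_sum summable_mult)
  also have "\<dots> = (\<Sum>j\<in>I. c j * (\<Sum>i. d i j))"
    using d_summable by (simp add: suminf_sum summable_mult suminf_mult)
  finally show ?thesis
    unfolding Dm_def d_def .
qed

lemma Dm_emp_le_average_rho:
  assumes "finite F" "F \<noteq> {}"
  shows "Dm \<phi> (emp act F x) (emp act F y) \<le> (\<Sum>s\<in>F. rho \<phi> (act s x) (act s y)) / card F"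
proof -
  define d where "d i s = (1/2::real)^Suc i * \<bar>\<phi> i (act s x) - \<phi> i (act s y)\<bar>" for i s
  have "\<bar>(\<integral>z. \<phi> i z \<partial>emp act F x) - (\<integral>z. \<phi> i z \<partial>emp act F y)\<bar>
      = \<bar>\<Sum>s\<in>F. \<phi> i (act s x) - \<phi> i (act s y)\<bar> / card F" for i
    using assms measurable by (simp add: integral_emp sum_subtractf flip: diff_divide_distrib)
  also have "\<dots> i \<le> (\<Sum>s\<in>F. \<bar>\<phi> i (act s x) - \<phi> i (act s y)\<bar>) / card F" for i
    by (intro divide_right_mono sum_abs) simp
  finally have "(1/2::real)^Suc i * \<bar>(\<integral>z. \<phi> i z \<partial>emp act F x) - (\<integral>z. \<phi> i z \<partial>emp act F y)\<bar>
      \<le> (\<Sum>s\<in>F. d i s) / card F" for i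
    unfolding d_def sum_distrib_left[symmetric] times_divide_eq_right[symmetric]
    by (rule mult_left_mono) simp_all
  moreover have d_summable: "summable (\<lambda>i. d i s)" for s
    unfolding d_def by (rule summable_rho)
  ultimately have "Dm \<phi> (emp act F x) (emp act F y) \<le> (\<Sum>i. (\<Sum>s\<in>F. d i s) / card F)"
    unfolding Dm_def using assms
    by (intro suminf_le summable_Dm summable_divide summable_sum probM_emp)
  also have "\<dots> = (\<Sum>i. \<Sum>s\<in>F. d i s) / card F"
    using d_summable by (intro suminf_divide summable_sum)
  also have "\<dots> = (\<Sum>s\<in>F. \<Sum>i. d i s) / card F"
    using d_summable by (simp add: suminf_sum)
  finally show ?thesis
    unfolding d_def rho_eq .
qed

text \<open>Outside the exceptional set \<rho> is at most \<epsilon>, on it at most 1.\<close>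
lemma average_rho_le_of_Bg:
  assumes "finite F" "F \<noteq> {}" "0 \<le> \<epsilon>" "y \<in> Bg \<phi> act g F x \<epsilon>"
  shows "(\<Sum>s\<in>F. rho \<phi> (act s x) (act s y)) / card F \<le> \<epsilon> + g \<epsilon>"
proof -
  define B where "B = {s\<in>F. rho \<phi> (act s x) (act s y) > \<epsilon>}"
  have "(\<Sum>s\<in>F. rho \<phi> (act s x) (act s y)) \<le> (\<Sum>s\<in>F. \<epsilon> + (if s \<in> B then 1 else 0))"
  proof (rule sum_mono)
    fix s assume "s \<in> F"
    then show "rho \<phi> (act s x) (act s y) \<le> \<epsilon> + (if s \<in> B then 1 else 0)"
      using assms(3) rho_le_1[of "act s x" "act s y"] unfolding B_def by auto
  qed
  also have "\<dots> = card F * \<epsilon> + card B"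
    using assms(1) unfolding B_def by (simp add: sum.distrib sum.If_cases Int_def)
  also have "\<dots> \<le> card F * (\<epsilon> + g \<epsilon>)"
    using assms(4) unfolding B_def Bg_def by (simp add: algebra_simps)
  finally show ?thesis
    using assms(1,2) by (simp add: divide_le_eq mult.commute)
qed

lemma Dm_emp_block_le:
  assumes F: "finite F" "F \<noteq> {}" and "0 \<le> \<epsilon>" "y \<in> Bg \<phi> act g F x \<epsilon>"
    and prob: "probM \<mu>" "probM \<alpha>" and close: "Dm \<phi> \<mu> (emp act F x) < \<xi>"
  shows "Dm \<phi> (emp act F y) \<alpha> \<le> Dm \<phi> \<mu> \<alpha> + \<xi> + \<epsilon> + g \<epsilon>"
proof -
  have Ey: "probM (emp act F y)" and Ex: "probM (emp act F x)"
    using F by (simp_all add: probM_emp)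
  have "Dm \<phi> (emp act F y) \<alpha> \<le> Dm \<phi> (emp act F y) (emp act F x) + Dm \<phi> (emp act F x) \<alpha>"
    by (rule Dm_triangle[OF Ey prob(2) Ex])
  moreover have "Dm \<phi> (emp act F x) \<alpha> \<le> Dm \<phi> (emp act F x) \<mu> + Dm \<phi> \<mu> \<alpha>"
    by (rule Dm_triangle[OF Ex prob(2) prob(1)])
  moreover have "Dm \<phi> (emp act F x) (emp act F y) \<le> \<epsilon> + g \<epsilon>"
    using assms by (intro order.trans[OF Dm_emp_le_average_rho average_rho_le_of_Bg])
  ultimately show ?thesis
    using close Dm_commute[of \<phi> "emp act F x" "emp act F y"] Dm_commute[of \<phi> "emp act F x" \<mu>]
    by linarith
qed

end

theorem mainTheorem3:
  fixes \<phi> :: "nat \<Rightarrow> 'x::metric_space \<Rightarrow> real"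
    and act :: "'g::group_add \<Rightarrow> 'x \<Rightarrow> 'x"
    and g :: "real \<Rightarrow> real" and m :: "real \<Rightarrow> 'g set \<times> real"
    and k :: nat and x :: "nat \<Rightarrow> 'x" and \<epsilon> :: "nat \<Rightarrow> real"
    and F :: "nat \<Rightarrow> 'g set" and \<mu> :: "nat \<Rightarrow> 'x measure" and \<xi> :: "nat \<Rightarrow> real"
    and y :: 'x and \<alpha> :: "'x measure"
  assumes compactX: "compact (UNIV :: 'x set)"
    and phi_cont: "\<And>i. continuous_on UNIV (\<phi> i)"
    and phi_range: "\<And>i z. 0 \<le> \<phi> i z \<and> \<phi> i z \<le> 1"
    and phi_sep: "\<And>z w. z \<noteq> w \<Longrightarrow> \<exists>i. \<phi> i z \<noteq> \<phi> i w"
    and rho_metric: "\<And>z w. dist z w = rho \<phi> z w"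
    and G_countable: "countable (UNIV :: 'g set)"
    and G_infinite: "infinite (UNIV :: 'g set)"
    and G_amenable: "amenable_group TYPE('g)"
    and act_zero: "\<And>z. act 0 z = z"
    and act_add: "\<And>s t z. act (s + t) z = act s (act t z)"
    and act_cont: "\<And>s. continuous_on UNIV (act s)"
    and APP: "almost_product \<phi> act g m"
    and k_pos: "0 < k"
    and eps: "\<And>j. j < k \<Longrightarrow> \<epsilon> j \<in> {0<..<1}"
    and F_fin: "\<And>j. j < k \<Longrightarrow> finite (F j) \<and> F j \<noteq> {}"
    and F_disj: "\<And>i j. i < k \<Longrightarrow> j < k \<Longrightarrow> i \<noteq> j \<Longrightarrow> F i \<inter> F j = {}"
    and F_inv: "\<And>j. j < k \<Longrightarrow> invariant (fst (m (\<epsilon> j))) (snd (m (\<epsilon> j))) (F j)"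
    and mu_prob: "\<And>j. j < k \<Longrightarrow> probM (\<mu> j)"
    and xi_pos: "\<And>j. j < k \<Longrightarrow> \<xi> j > 0"
    and emp_close: "\<And>j. j < k \<Longrightarrow> emp act (F j) (x j) \<in> Bm \<phi> (\<mu> j) (\<xi> j)"
    and y_in: "y \<in> (\<Inter>j\<in>{..<k}. Bg \<phi> act g (F j) (x j) (\<epsilon> j))"
    and alpha_prob: "probM \<alpha>"
  shows "Dm \<phi> (emp act (\<Union>j\<in>{..<k}. F j) y) \<alpha>
     \<le> (\<Sum>j<k. real (card (F j)) / real (card (\<Union>i\<in>{..<k}. F i))
            * (Dm \<phi> (\<mu> j) \<alpha> + \<xi> j + \<epsilon> j + g (\<epsilon> j)))"
proof -
  interpret unit_test_family \<phi>
    using phi_cont phi_range by unfold_locales (simp_all add: borel_measurable_continuous_onI)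
  let ?U = "\<Union>j\<in>{..<k}. F j"
  define c where "c j = real (card (F j)) / real (card ?U)" for j
  have disj: "disjoint_family_on F {..<k}"
    using F_disj by (auto simp: disjoint_family_on_def)
  have U: "finite ?U" "?U \<noteq> {}"
    using F_fin k_pos by auto
  have "card ?U = (\<Sum>j<k. card (F j))"
    using F_fin F_disj by (subst card_UN_disjoint) auto
  then have c_sum: "(\<Sum>j<k. c j) = 1"
    using U by (simp add: c_def flip: sum_divide_distrib of_nat_sum)
  have comb: "(\<integral>z. \<phi> i z \<partial>emp act ?U y) = (\<Sum>j<k. c j * (\<integral>z. \<phi> i z \<partial>emp act (F j) y))" for i
    unfolding c_def using F_fin k_pos
    by (intro integral_emp_UN_disjoint[OF finite_lessThan _ _ disj measurable]) auto
  have "Dm \<phi> (emp act ?U y) \<alpha> \<le> (\<Sum>j<k. c j * Dm \<phi> (emp act (F j) y) \<alpha>)"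
    using U F_fin by (intro Dm_convex[OF _ c_sum _ _ alpha_prob comb] probM_emp)
      (auto simp: c_def)
  also have "\<dots> \<le> (\<Sum>j<k. c j * (Dm \<phi> (\<mu> j) \<alpha> + \<xi> j + \<epsilon> j + g (\<epsilon> j)))"
  proof (intro sum_mono mult_left_mono)
    fix j assume "j \<in> {..<k}"
    then have j: "j < k" by simp
    show "Dm \<phi> (emp act (F j) y) \<alpha> \<le> Dm \<phi> (\<mu> j) \<alpha> + \<xi> j + \<epsilon> j + g (\<epsilon> j)"
      using F_fin[OF j] eps[OF j] y_in j emp_close[OF j] mu_prob[OF j] alpha_prob
      by (intro Dm_emp_block_le) (auto simp: Bm_def)
  qed (simp add: c_def)
  finally show ?thesis
    unfolding c_def .
qed

end
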